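(* Consider the linear system $\dot x(t)=Ax(t)+Bu(t)$ with constraints $(x(t),u(t))\in\mathcal{E}$ and $u(t)\in U$, and suppose (A4) and (A5) hold. Then for every $\lambda\in[0,1]$ the set $\lambda\mathcal{A}$ is control invariant. (A4): $(A,B)$ is stabilisable. (A5): $U\subset\mathbb{R}^m$ and $\mathcal{E}:=\{(x,u):g(x,u)\le0\}$, $g\in\mathcal{C}^2(\mathbb{R}^n\times\mathbb{R}^m,\mathbb{R}^p)$, are convex, compact, contain the origin in their interior, and each $u\mapsto g_i(x,u)$ is convex.
   Context: $\mathcal{U}_\infty(x_0)$ is the set of $u\in L^\infty_{\mathrm{loc}}(\mathbb{R}_{\ge0},\mathbb{R}^m)$ with $(x(t;x_0,u),u(t))\in\mathcal{E}$ and $u(t)\in U$ for all $t\ge0$; $\mathcal{A}:=\{x_0:\mathcal{U}_\infty(x_0)\neq\emptyset\}$, $\lambda\mathcal{A}:=\{\lambda x:x\in\mathcal{A}\}$. A set $S$ is control invariant if for every $x_0\in S$, $\mathcal{U}_\infty(x_0)\neq\emptyset$ and there is $u\in\mathcal{U}_\infty(x_0)$ with $x(t;x_0,u)\in S$ for all $t\ge0$. *)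

theory Defs
  imports "HOL-Analysis.Analysis"
begin

definition C2 :: "('a::real_normed_vector \<Rightarrow> 'b::real_normed_vector) \<Rightarrow> bool" where
  "C2 f \<longleftrightarrow> (\<exists>(Df :: 'a \<Rightarrow> ('a \<Rightarrow>\<^sub>L 'b)) (D2f :: 'a \<Rightarrow> ('a \<Rightarrow>\<^sub>L ('a \<Rightarrow>\<^sub>L 'b))).
      (\<forall>z. (f has_derivative blinfun_apply (Df z)) (at z)) \<and>
      (\<forall>z. (Df has_derivative blinfun_apply (D2f z)) (at z)) \<and>
      continuous_on UNIV D2f)"

definition hurwitz :: "real^'n^'n \<Rightarrow> bool" where
  "hurwitz M \<longleftrightarrow> (\<forall>(l::complex) (v::complex^'n).
      v \<noteq> 0 \<and> (\<chi> i j. complex_of_real (M $ i $ j)) *v v = l *s v \<longrightarrow> Re l < 0)"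

definition stabilisable :: "real^'n^'n \<Rightarrow> real^'m^'n \<Rightarrow> bool" where
  "stabilisable A B \<longleftrightarrow> (\<exists>K :: real^'n^'m. hurwitz (A + B ** K))"

definition Linf_loc :: "(real \<Rightarrow> 'a::euclidean_space) \<Rightarrow> bool" where
  "Linf_loc u \<longleftrightarrow> u \<in> borel_measurable (restrict_space lborel {0..}) \<and>
     (\<forall>T\<ge>0. \<exists>C. AE t in lborel. t \<in> {0..T} \<longrightarrow> norm (u t) \<le> C)"

text \<open>(Caratheodory) solution of x' = A x + B u, x(0) = x0, on [0,inf).\<close>
definition is_traj :: "real^'n^'n \<Rightarrow> real^'m^'n \<Rightarrow> real^'n \<Rightarrow> (real \<Rightarrow> real^'m) \<Rightarrow> (real \<Rightarrow> real^'n) \<Rightarrow> bool" where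
  "is_traj A B x0 u x \<longleftrightarrow> continuous_on {0..} x \<and>
     (\<forall>t\<ge>0. (\<lambda>s. A *v x s + B *v u s) integrable_on {0..t} \<and>
             x t = x0 + integral {0..t} (\<lambda>s. A *v x s + B *v u s))"

text \<open>x(t;x0,u): the value at time t of the (unique) solution.\<close>
definition traj :: "real^'n^'n \<Rightarrow> real^'m^'n \<Rightarrow> real^'n \<Rightarrow> (real \<Rightarrow> real^'m) \<Rightarrow> real \<Rightarrow> real^'n" where
  "traj A B x0 u t = (THE y. \<exists>x. is_traj A B x0 u x \<and> x t = y)"

definition Uinf :: "real^'n^'n \<Rightarrow> real^'m^'n \<Rightarrow> ((real^'n) \<times> (real^'m)) set \<Rightarrow> (real^'m) set
    \<Rightarrow> real^'n \<Rightarrow> (real \<Rightarrow> real^'m) set" where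
  "Uinf A B E U x0 = {u. Linf_loc u \<and>
     (\<forall>t\<ge>0. (traj A B x0 u t, u t) \<in> E \<and> u t \<in> U)}"

definition admissible_set :: "real^'n^'n \<Rightarrow> real^'m^'n \<Rightarrow> ((real^'n) \<times> (real^'m)) set \<Rightarrow> (real^'m) set
    \<Rightarrow> (real^'n) set" where
  "admissible_set A B E U = {x0. Uinf A B E U x0 \<noteq> {}}"

definition control_invariant :: "real^'n^'n \<Rightarrow> real^'m^'n \<Rightarrow> ((real^'n) \<times> (real^'m)) set \<Rightarrow> (real^'m) set
    \<Rightarrow> (real^'n) set \<Rightarrow> bool" where
  "control_invariant A B E U S \<longleftrightarrow> (\<forall>x0\<in>S. Uinf A B E U x0 \<noteq> {} \<and>
      (\<exists>u\<in>Uinf A B E U x0. \<forall>t\<ge>0. traj A B x0 u t \<in> S))"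

end

theory Submission
  imports Defs
begin

text \<open>Scaling a control by \<open>\<lambda>\<close> scales the trajectory by \<open>\<lambda>\<close>, and since \<open>\<E>\<close> and \<open>U\<close> are
  convex and contain the origin, \<open>\<lambda>u\<close> is admissible from \<open>\<lambda>y\<^sub>0\<close> whenever \<open>u\<close> is admissible
  from \<open>y\<^sub>0\<close>. Its trajectory \<open>\<lambda>x(t)\<close> stays in \<open>\<lambda>\<A>\<close>, because by time invariance the tail
  \<open>u(t + \<cdot>)\<close> is admissible from \<open>x(t)\<close>. Since \<open>traj\<close> is defined by a definite description,
  the argument needs existence (Picard iteration) and uniqueness (Gronwall-type estimate) of
  solutions of the integral equation \<open>x(t) = x\<^sub>0 + \<integral>\<^sub>0\<^sup>t (A x + B u)\<close>.\<close>

section \<open>Linear Volterra integral equations\<close>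

lemma continuous_on_atLeast_if_atLeastAtMost:
  fixes x :: "real \<Rightarrow> 'a::topological_space"
  assumes "\<And>T. T \<ge> 0 \<Longrightarrow> continuous_on {0..T} x"
  shows "continuous_on {0..} x"
  unfolding continuous_on_def
proof
  fix t :: real assume t: "t \<in> {0..}"
  have "at t within {0..} = at t within {0..t+1}"
    by (rule at_within_nhd[of _ "{..<t+1}"]) auto
  moreover have "(x \<longlongrightarrow> x t) (at t within {0..t+1})"
    using assms[of "t+1"] t unfolding continuous_on_def by auto
  ultimately show "(x \<longlongrightarrow> x t) (at t within {0..})" by simp
qed

lemma has_integral_exp_term:
  fixes a M t :: real
  assumes "t \<ge> 0"
  shows "((\<lambda>s. a * (M * (a * s)^k / fact k)) has_integral M * (a * t)^Suc k / fact (Suc k)) {0..t}"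
proof -
  have "((\<lambda>s. a * (M * (a * s)^k / fact k)) has_integral
         M * (a * t)^Suc k / fact (Suc k) - M * (a * 0)^Suc k / fact (Suc k)) {0..t}"
  proof (rule fundamental_theorem_of_calculus)
    fix s :: real
    define c where "c = M * a^Suc k / fact (Suc k)"
    have "((\<lambda>s. c * s^Suc k) has_real_derivative c * (real (Suc k) * s^k)) (at s)"
      using DERIV_cmult[OF DERIV_pow[of "Suc k" s], of c] by simp
    moreover have "(\<lambda>s. c * s^Suc k) = (\<lambda>s. M * (a * s)^Suc k / fact (Suc k))"
      by (simp add: c_def power_mult_distrib mult_ac)
    moreover have "c * (real (Suc k) * s^k) = a * (M * (a * s)^k / fact k)"
      by (simp add: c_def field_simps del: of_nat_Suc)
    ultimately show "((\<lambda>s. M * (a * s)^Suc k / fact (Suc k)) has_vector_derivative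
        a * (M * (a * s)^k / fact k)) (at s within {0..t})"
      by (metis has_real_derivative_iff_has_vector_derivative has_vector_derivative_at_within)
  qed (use assms in auto)
  then show ?thesis by simp
qed

lemma norm_integral_linear_le_exp_term:
  fixes L :: "'a::banach \<Rightarrow> 'a" and g :: "real \<Rightarrow> 'a"
  assumes L: "bounded_linear L" "\<And>v. norm (L v) \<le> a * norm v" "a \<ge> 0"
    and cont: "continuous_on {0..t} g"
    and bound: "\<And>s. s \<in> {0..t} \<Longrightarrow> norm (g s) \<le> M * (a * s)^k / fact k"
    and "t \<ge> 0"
  shows "norm (integral {0..t} (\<lambda>s. L (g s))) \<le> M * (a * t)^Suc k / fact (Suc k)"
proof -
  have "norm (integral {0..t} (\<lambda>s. L (g s))) \<le> integral {0..t} (\<lambda>s. a * (M * (a * s)^k / fact k))"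
  proof (rule integral_norm_bound_integral)
    show "(\<lambda>s. L (g s)) integrable_on {0..t}"
      by (intro integrable_continuous_interval bounded_linear.continuous_on[OF L(1) cont])
    show "(\<lambda>s. a * (M * (a * s)^k / fact k)) integrable_on {0..t}"
      using has_integral_exp_term[OF \<open>t \<ge> 0\<close>] by blast
    show "norm (L (g s)) \<le> a * (M * (a * s)^k / fact k)" if "s \<in> {0..t}" for s
      using L(2)[of "g s"] mult_left_mono[OF bound[OF that] L(3)] by linarith
  qed
  also have "\<dots> = M * (a * t)^Suc k / fact (Suc k)"
    by (rule integral_unique[OF has_integral_exp_term[OF \<open>t \<ge> 0\<close>]])
  finally show ?thesis .
qed

lemma norm_iterated_integral_le:
  fixes L :: "'a::banach \<Rightarrow> 'a" and D :: "nat \<Rightarrow> real \<Rightarrow> 'a"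
  assumes L: "bounded_linear L" "\<And>v. norm (L v) \<le> a * norm v" "a \<ge> 0"
    and cont: "\<And>k. continuous_on {0..T} (D k)"
    and D0: "\<And>s. s \<in> {0..T} \<Longrightarrow> norm (D 0 s) \<le> M"
    and DS: "\<And>k t. t \<in> {0..T} \<Longrightarrow> D (Suc k) t = integral {0..t} (\<lambda>s. L (D k s))"
    and s: "s \<in> {0..T}"
  shows "norm (D k s) \<le> M * (a * s)^k / fact k"
  using s
proof (induction k arbitrary: s)
  case 0
  then show ?case using D0 by simp
next
  case (Suc k)
  have "continuous_on {0..s} (D k)"
    using continuous_on_subset[OF cont] Suc.prems by auto
  then have "norm (integral {0..s} (\<lambda>r. L (D k r))) \<le> M * (a * s)^Suc k / fact (Suc k)"
    by (rule norm_integral_linear_le_exp_term[OF L]) (use Suc in auto)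
  then show ?case using DS[OF Suc.prems] by simp
qed

lemma linear_integral_equation_zero:
  fixes L :: "'a::banach \<Rightarrow> 'a" and d :: "real \<Rightarrow> 'a"
  assumes L: "bounded_linear L"
    and cont: "continuous_on {0..T} d"
    and eq: "\<And>t. t \<in> {0..T} \<Longrightarrow> d t = integral {0..t} (\<lambda>s. L (d s))"
    and t: "t \<in> {0..T}"
  shows "d t = 0"
proof -
  obtain a where a: "a > 0" "\<And>v. norm (L v) \<le> a * norm v"
    using bounded_linear.pos_bounded[OF L] by (auto simp: mult.commute)
  have "compact (d ` {0..T})"
    by (intro compact_continuous_image cont) auto
  then obtain M where M: "\<And>s. s \<in> {0..T} \<Longrightarrow> norm (d s) \<le> M"
    using compact_imp_bounded bounded_iff by (metis image_eqI)
  have "norm (d t) \<le> M * (a * t)^k / fact k" for k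
    by (rule norm_iterated_integral_le[where D = "\<lambda>_. d", OF L a(2) _ cont M eq t]) (use a in auto)
  moreover have "(\<lambda>k. M * ((a * t)^k / fact k)) \<longlonglongrightarrow> M * 0"
    by (intro tendsto_mult tendsto_const)
       (use summable_LIMSEQ_zero[OF summable_exp, of "a * t"] in \<open>simp add: field_simps\<close>)
  ultimately have "norm (d t) \<le> 0"
    by (intro tendsto_le[OF _ _ tendsto_const]) auto
  then show ?thesis by simp
qed

lemma picard_iterates_uniform_limit:
  fixes L :: "'a::banach \<Rightarrow> 'a" and X :: "nat \<Rightarrow> real \<Rightarrow> 'a"
  assumes L: "bounded_linear L"
    and f: "f integrable_on {0..T}"
    and cont: "\<And>k. continuous_on {0..T} (X k)"
    and XS: "\<And>k t. t \<in> {0..T} \<Longrightarrow> X (Suc k) t = x0 + integral {0..t} (\<lambda>s. L (X k s) + f s)"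
  shows "uniform_limit {0..T} X (\<lambda>t. lim (\<lambda>k. X k t)) sequentially"
proof -
  obtain a where a: "a > 0" "\<And>v. norm (L v) \<le> a * norm v"
    using bounded_linear.pos_bounded[OF L] by (auto simp: mult.commute)
  define D where "D k t = X (Suc k) t - X k t" for k t
  have contD: "continuous_on {0..T} (D k)" for k
    unfolding D_def by (intro continuous_intros cont)
  have DS: "D (Suc k) t = integral {0..t} (\<lambda>s. L (D k s))" if t: "t \<in> {0..T}" for k t
  proof -
    have int: "(\<lambda>s. L (X j s) + f s) integrable_on {0..t}" for j
      using t by (intro integrable_add integrable_continuous_interval
          bounded_linear.continuous_on[OF L] continuous_on_subset[OF cont]
          integrable_on_subinterval[OF f]) auto
    have "D (Suc k) t = integral {0..t} (\<lambda>s. L (X (Suc k) s) + f s) - integral {0..t} (\<lambda>s. L (X k s) + f s)"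
      using t by (simp add: D_def XS)
    also have "\<dots> = integral {0..t} (\<lambda>s. (L (X (Suc k) s) + f s) - (L (X k s) + f s))"
      by (rule integral_diff[OF int int, symmetric])
    also have "\<dots> = integral {0..t} (\<lambda>s. L (D k s))"
      by (simp add: D_def linear_diff[OF bounded_linear.linear[OF L]])
    finally show ?thesis .
  qed
  have "compact (D 0 ` {0..T})"
    by (intro compact_continuous_image contD) auto
  then obtain M where M: "\<And>s. s \<in> {0..T} \<Longrightarrow> norm (D 0 s) \<le> M"
    using compact_imp_bounded bounded_iff by (metis image_eqI)
  have bound: "norm (D k s) \<le> M * (a * T)^k / fact k" if s: "s \<in> {0..T}" for k s
  proof -
    have "norm (D k s) \<le> M * (a * s)^k / fact k"
      by (rule norm_iterated_integral_le[where D = D, OF L a(2) _ contD M DS s]) (use a in auto)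
    also have "\<dots> \<le> M * (a * T)^k / fact k"
      using s a order_trans[OF norm_ge_zero M[OF s]]
      by (intro divide_right_mono mult_left_mono power_mono) auto
    finally show ?thesis .
  qed
  have "summable (\<lambda>k. M * (a * T)^k / fact k)"
    using summable_mult[OF summable_exp[of "a * T"], of M] by (simp add: field_simps)
  then have "uniform_limit {0..T} (\<lambda>k t. X 0 t + (\<Sum>i<k. D i t)) (\<lambda>t. X 0 t + (\<Sum>i. D i t)) sequentially"
    by (intro uniform_limit_add uniform_limit_const Weierstrass_m_test[OF bound])
  moreover have "X 0 t + (\<Sum>i<k. D i t) = X k t" for k t
    unfolding D_def by (simp add: sum_lessThan_telescope[of "\<lambda>i. X i t"])
  ultimately have lim: "uniform_limit {0..T} X (\<lambda>t. X 0 t + (\<Sum>i. D i t)) sequentially"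
    by simp
  have "X 0 t + (\<Sum>i. D i t) = lim (\<lambda>k. X k t)" if "t \<in> {0..T}" for t
    using tendsto_uniform_limitI[OF lim that] by (rule limI[symmetric])
  then show ?thesis
    by (intro uniform_limit_cong'[THEN iffD1, OF refl _ lim])
qed

lemma uniform_limit_solves_integral_equation:
  fixes L :: "'a::banach \<Rightarrow> 'a" and X :: "nat \<Rightarrow> real \<Rightarrow> 'a"
  assumes L: "bounded_linear L"
    and f: "f integrable_on {0..t}"
    and cont: "\<And>k. continuous_on {0..t} (X k)"
    and XS: "\<And>k. X (Suc k) t = x0 + integral {0..t} (\<lambda>s. L (X k s) + f s)"
    and lim: "uniform_limit {0..t} X Y sequentially"
    and "t \<ge> 0"
  shows "Y t = x0 + integral {0..t} (\<lambda>s. L (Y s) + f s)"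
proof -
  obtain I J where I: "\<And>k. ((\<lambda>s. L (X k s)) has_integral I k) {0..t}"
    and J: "((\<lambda>s. L (Y s)) has_integral J) {0..t}" and IJ: "I \<longlonglongrightarrow> J"
    by (rule uniform_limit_integral[OF bounded_linear.uniform_limit[OF L lim]])
      (auto intro: bounded_linear.continuous_on[OF L cont])
  have "(\<lambda>k. X (Suc k) t) \<longlonglongrightarrow> x0 + (J + integral {0..t} f)"
  proof -
    have "X (Suc k) t = x0 + (I k + integral {0..t} f)" for k
      using XS[of k] integral_add[OF has_integral_integrable[OF I[of k]] f]
      by (simp add: integral_unique[OF I])
    then show ?thesis by (simp add: tendsto_add[OF tendsto_const tendsto_add[OF IJ tendsto_const]])
  qed
  moreover have "(\<lambda>k. X (Suc k) t) \<longlonglongrightarrow> Y t"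
    using LIMSEQ_Suc[OF tendsto_uniform_limitI[OF lim]] \<open>t \<ge> 0\<close> by simp
  ultimately have "Y t = x0 + (J + integral {0..t} f)"
    using LIMSEQ_unique by blast
  also have "J + integral {0..t} f = integral {0..t} (\<lambda>s. L (Y s) + f s)"
    using integral_add[OF has_integral_integrable[OF J] f] by (simp add: integral_unique[OF J])
  finally show ?thesis .
qed

lemma linear_integral_equation_solvable:
  fixes L :: "'a::banach \<Rightarrow> 'a" and f :: "real \<Rightarrow> 'a"
  assumes L: "bounded_linear L"
    and f: "\<And>T. T \<ge> 0 \<Longrightarrow> f integrable_on {0..T}"
  obtains x where "continuous_on {0..} x"
    and "\<And>t. t \<ge> 0 \<Longrightarrow> (\<lambda>s. L (x s) + f s) integrable_on {0..t}"
    and "\<And>t. t \<ge> 0 \<Longrightarrow> x t = x0 + integral {0..t} (\<lambda>s. L (x s) + f s)"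
proof -
  define X where "X = rec_nat (\<lambda>t. x0) (\<lambda>k Xk t. x0 + integral {0..t} (\<lambda>s. L (Xk s) + f s))"
  have XS: "X (Suc k) t = x0 + integral {0..t} (\<lambda>s. L (X k s) + f s)" for k t
    by (simp add: X_def)
  have int: "(\<lambda>s. L (y s) + f s) integrable_on {0..T}"
    if "T \<ge> 0" "continuous_on {0..T} y" for T and y :: "real \<Rightarrow> 'a"
    using that by (intro integrable_add f integrable_continuous_interval
        bounded_linear.continuous_on[OF L])
  have cont: "continuous_on {0..T} (X k)" if T: "T \<ge> 0" for k T
  proof (induction k)
    case 0
    then show ?case by (simp add: X_def)
  next
    case (Suc k)
    then show ?case
      unfolding XS by (intro continuous_intros indefinite_integral_continuous_1 int T)
  qed
  define x where "x t = lim (\<lambda>k. X k t)" for t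
  have lim: "uniform_limit {0..T} X x sequentially" if "T \<ge> 0" for T
    unfolding x_def[abs_def]
    by (rule picard_iterates_uniform_limit[OF L f[OF that] cont[OF that]]) (simp add: XS)
  have cont_x: "continuous_on {0..T} x" if "T \<ge> 0" for T
    by (rule uniform_limit_theorem[OF _ lim[OF that]]) (use cont[OF that] in \<open>auto intro: always_eventually\<close>)
  show ?thesis
  proof
    show "continuous_on {0..} x"
      by (rule continuous_on_atLeast_if_atLeastAtMost[OF cont_x])
    show "(\<lambda>s. L (x s) + f s) integrable_on {0..t}" if "t \<ge> 0" for t
      using int[OF that cont_x[OF that]] .
    show "x t = x0 + integral {0..t} (\<lambda>s. L (x s) + f s)" if "t \<ge> 0" for t
      by (rule uniform_limit_solves_integral_equation[OF L f[OF that] cont[OF that] XS lim[OF that] that])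
  qed
qed

section \<open>Locally essentially bounded controls\<close>

lemma Linf_loc_integrable_on:
  fixes u :: "real \<Rightarrow> 'a::euclidean_space"
  assumes u: "Linf_loc u" and t: "t \<ge> 0"
  shows "u integrable_on {0..t}"
proof -
  obtain C where C: "AE s in lborel. s \<in> {0..t} \<longrightarrow> norm (u s) \<le> C"
    using u t unfolding Linf_loc_def by blast
  have u_meas: "(\<lambda>s. indicator {0..} s *\<^sub>R u s) \<in> borel_measurable lborel"
    using u borel_measurable_restrict_space_iff[of "{0..}" lborel u] unfolding Linf_loc_def by simp
  have "(\<lambda>s. indicator {0..t} s *\<^sub>R (indicator {0..} s *\<^sub>R u s)) \<in> borel_measurable lborel"
    using borel_measurable_scaleR[OF _ u_meas, of "indicator {0..t}"] by simp
  moreover have "(\<lambda>s. indicator {0..t} s *\<^sub>R (indicator {0..} s *\<^sub>R u s)) = (\<lambda>s. indicator {0..t} s *\<^sub>R u s)"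
    by (auto simp: indicator_def fun_eq_iff)
  ultimately have meas: "(\<lambda>s. indicator {0..t} s *\<^sub>R u s) \<in> borel_measurable lborel"
    by simp
  have "integrable lborel (\<lambda>s. indicator {0..t} s *\<^sub>R u s)"
  proof (rule Bochner_Integration.integrable_bound[OF _ meas])
    show "integrable lborel (\<lambda>s. indicator {0..t} s * C :: real)"
      using t by (intro integrable_mult_left integrable_real_indicator) auto
    show "AE s in lborel. norm (indicator {0..t} s *\<^sub>R u s) \<le> norm (indicator {0..t} s * C :: real)"
      using C by eventually_elim (auto simp: indicator_def)
  qed
  then show ?thesis
    by (intro set_borel_integral_eq_integral(1)) (simp add: set_integrable_def)
qed

lemma Linf_loc_scaleR:
  fixes u :: "real \<Rightarrow> 'a::euclidean_space"
  assumes u: "Linf_loc u"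
  shows "Linf_loc (\<lambda>t. c *\<^sub>R u t)"
  unfolding Linf_loc_def
proof safe
  show "(\<lambda>t. c *\<^sub>R u t) \<in> borel_measurable (restrict_space lborel {0..})"
    using u unfolding Linf_loc_def by (intro borel_measurable_scaleR) auto
  fix T :: real assume "T \<ge> 0"
  then obtain C where C: "AE s in lborel. s \<in> {0..T} \<longrightarrow> norm (u s) \<le> C"
    using u unfolding Linf_loc_def by blast
  have "AE s in lborel. s \<in> {0..T} \<longrightarrow> norm (c *\<^sub>R u s) \<le> \<bar>c\<bar> * C"
    using C by eventually_elim (auto intro: mult_left_mono)
  then show "\<exists>C. AE s in lborel. s \<in> {0..T} \<longrightarrow> norm (c *\<^sub>R u s) \<le> C" by blast
qed

lemma Linf_loc_shift:
  fixes u :: "real \<Rightarrow> 'a::euclidean_space"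
  assumes u: "Linf_loc u" and tau: "tau \<ge> 0"
  shows "Linf_loc (\<lambda>s. u (tau + s))"
  unfolding Linf_loc_def
proof safe
  have "(\<lambda>s. tau + s) \<in> measurable (restrict_space lborel {0..}) (restrict_space lborel {0..})"
    by (rule measurable_restrict_space3) (use tau in auto)
  then show "(\<lambda>s. u (tau + s)) \<in> borel_measurable (restrict_space lborel {0..})"
    using u unfolding Linf_loc_def by (intro measurable_compose[where f = "\<lambda>s. tau + s" and g = u]) auto
  fix T :: real assume "T \<ge> 0"
  then obtain C where "AE s in lborel. s \<in> {0..tau + T} \<longrightarrow> norm (u s) \<le> C"
    using u tau unfolding Linf_loc_def by (meson add_nonneg_nonneg)
  then obtain N where bad: "{s \<in> space lborel. \<not> (s \<in> {0..tau + T} \<longrightarrow> norm (u s) \<le> C)} \<subseteq> N"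
    and "emeasure lborel N = 0" "N \<in> sets lborel"
    by (rule AE_E)
  then have N: "N \<in> null_sets lborel"
    by auto
  have "{s \<in> space lborel. \<not> (s \<in> {0..T} \<longrightarrow> norm (u (tau + s)) \<le> C)} \<subseteq> {s. s - (- tau) \<in> N}"
    using bad tau by (auto simp: add.commute)
  with null_sets_translation[OF N] have "AE s in lborel. s \<in> {0..T} \<longrightarrow> norm (u (tau + s)) \<le> C"
    by (rule AE_I')
  then show "\<exists>C. AE s in lborel. s \<in> {0..T} \<longrightarrow> norm (u (tau + s)) \<le> C" by blast
qed

section \<open>Trajectories and admissible controls\<close>

lemma is_traj_exists:
  fixes A :: "real^'n^'n" and B :: "real^'m^'n"
  assumes "Linf_loc u"
  obtains x where "is_traj A B x0 u x"
proof -
  have "(\<lambda>s. B *v u s) integrable_on {0..t}" if "t \<ge> 0" for t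
    using integrable_linear[OF Linf_loc_integrable_on[OF assms that] matrix_vector_mul_bounded_linear[of B]]
    by (simp add: o_def)
  then obtain x where "continuous_on {0..} x"
    and "\<And>t. t \<ge> 0 \<Longrightarrow> (\<lambda>s. A *v x s + B *v u s) integrable_on {0..t}"
    and "\<And>t. t \<ge> 0 \<Longrightarrow> x t = x0 + integral {0..t} (\<lambda>s. A *v x s + B *v u s)"
    using linear_integral_equation_solvable[OF matrix_vector_mul_bounded_linear, of "\<lambda>s. B *v u s" A x0]
    by blast
  then have "is_traj A B x0 u x"
    by (simp add: is_traj_def)
  then show ?thesis
    by (rule that)
qed

lemma traj_eq:
  assumes x: "is_traj A B x0 u x" and t: "t \<ge> 0"
  shows "traj A B x0 u t = x t"
  unfolding traj_def
proof (rule the_equality)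
  show "\<exists>x'. is_traj A B x0 u x' \<and> x' t = x t"
    using x by blast
next
  fix y assume "\<exists>x'. is_traj A B x0 u x' \<and> x' t = y"
  then obtain x' where x': "is_traj A B x0 u x'" "x' t = y" by blast
  define d where "d s = x' s - x s" for s
  have cont: "continuous_on {0..t} d"
    using x x' unfolding is_traj_def d_def by (auto intro!: continuous_on_diff intro: continuous_on_subset)
  have eq: "d s = integral {0..s} (\<lambda>r. A *v d r)" if s: "s \<in> {0..t}" for s
  proof -
    have "d s = integral {0..s} (\<lambda>r. A *v x' r + B *v u r) - integral {0..s} (\<lambda>r. A *v x r + B *v u r)"
      using x x' s unfolding is_traj_def d_def by auto
    also have "\<dots> = integral {0..s} (\<lambda>r. (A *v x' r + B *v u r) - (A *v x r + B *v u r))"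
      by (rule integral_diff[symmetric]) (use x x' s in \<open>auto simp: is_traj_def\<close>)
    also have "\<dots> = integral {0..s} (\<lambda>r. A *v d r)"
      by (simp add: d_def matrix_vector_mult_diff_distrib)
    finally show ?thesis .
  qed
  have "d t = 0"
    using linear_integral_equation_zero[OF matrix_vector_mul_bounded_linear cont eq] t by simp
  then show "y = x t" using x' by (simp add: d_def)
qed

lemma is_traj_scaleR:
  assumes x: "is_traj A B x0 u x"
  shows "is_traj A B (c *\<^sub>R x0) (\<lambda>t. c *\<^sub>R u t) (\<lambda>t. c *\<^sub>R x t)"
  unfolding is_traj_def
proof safe
  show "continuous_on {0..} (\<lambda>t. c *\<^sub>R x t)"
    using x unfolding is_traj_def by (intro continuous_intros) auto
  fix t :: real assume t: "t \<ge> 0"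
  have lin: "(\<lambda>s. A *v (c *\<^sub>R x s) + B *v (c *\<^sub>R u s)) = (\<lambda>s. c *\<^sub>R (A *v x s + B *v u s))"
    by (simp add: matrix_vector_mult_scaleR scaleR_add_right)
  have int: "(\<lambda>s. A *v x s + B *v u s) integrable_on {0..t}"
    and eq: "x t = x0 + integral {0..t} (\<lambda>s. A *v x s + B *v u s)"
    using x t unfolding is_traj_def by auto
  show "(\<lambda>s. A *v (c *\<^sub>R x s) + B *v (c *\<^sub>R u s)) integrable_on {0..t}"
    unfolding lin by (rule integrable_cmul[OF int])
  show "c *\<^sub>R x t = c *\<^sub>R x0 + integral {0..t} (\<lambda>s. A *v (c *\<^sub>R x s) + B *v (c *\<^sub>R u s))"
    unfolding lin by (subst integral_cmul) (simp add: eq scaleR_add_right)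
qed

lemma is_traj_shift:
  assumes x: "is_traj A B x0 u x" and tau: "tau \<ge> 0"
  shows "is_traj A B (x tau) (\<lambda>s. u (tau + s)) (\<lambda>s. x (tau + s))"
  unfolding is_traj_def
proof safe
  have "continuous_on {0..} x" using x unfolding is_traj_def by auto
  then show "continuous_on {0..} (\<lambda>s. x (tau + s))"
    by (rule continuous_on_compose2) (use tau in \<open>auto intro!: continuous_on_add\<close>)
  fix s :: real assume s: "s \<ge> 0"
  define g where "g r = A *v x r + B *v u r" for r
  have int: "g integrable_on {0..tau + s}" and eq: "x (tau + s) = x0 + integral {0..tau + s} g"
    and eq_tau: "x tau = x0 + integral {0..tau} g"
    using x s tau unfolding is_traj_def g_def by auto
  have "g integrable_on {tau..tau + s}"
    by (rule integrable_subinterval_real[OF int]) (use tau in auto)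
  then show "(\<lambda>r. A *v x (tau + r) + B *v u (tau + r)) integrable_on {0..s}"
    using integrable_on_shift_Icc_real[of g tau 0 s] by (simp add: g_def o_def add.commute)
  have "integral {0..tau + s} g = integral {0..tau} g + integral {tau..tau + s} g"
    using Henstock_Kurzweil_Integration.integral_combine[where a = 0 and c = tau and b = "tau + s" and f = g] tau s int by simp
  moreover have "integral {tau..tau + s} g = integral {0..s} (\<lambda>r. g (r + tau))"
    using integral_shift_real_ivl[of tau tau "tau + s" g] by simp
  ultimately show "x (tau + s) = x tau + integral {0..s} (\<lambda>r. A *v x (tau + r) + B *v u (tau + r))"
    using eq eq_tau by (simp add: g_def add.commute)
qed

lemma traj_scaleR:
  fixes A :: "real^'n^'n" and B :: "real^'m^'n"
  assumes "Linf_loc u" and "t \<ge> 0"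
  shows "traj A B (c *\<^sub>R x0) (\<lambda>t. c *\<^sub>R u t) t = c *\<^sub>R traj A B x0 u t"
proof -
  obtain x where x: "is_traj A B x0 u x"
    using is_traj_exists[OF assms(1)] .
  show ?thesis
    using traj_eq[OF x assms(2)] traj_eq[OF is_traj_scaleR[OF x] assms(2)] by simp
qed

lemma traj_shift:
  fixes A :: "real^'n^'n" and B :: "real^'m^'n"
  assumes "Linf_loc u" and "tau \<ge> 0" and "s \<ge> 0"
  shows "traj A B (traj A B x0 u tau) (\<lambda>s. u (tau + s)) s = traj A B x0 u (tau + s)"
proof -
  obtain x where x: "is_traj A B x0 u x"
    using is_traj_exists[OF assms(1)] .
  show ?thesis
    using traj_eq[OF x] traj_eq[OF is_traj_shift[OF x], of tau s] assms by simp
qed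

lemma traj_in_admissible_set:
  assumes u: "u \<in> Uinf A B E U x0" and "t \<ge> 0"
  shows "traj A B x0 u t \<in> admissible_set A B E U"
proof -
  have "(\<lambda>s. u (t + s)) \<in> Uinf A B E U (traj A B x0 u t)"
    using u \<open>t \<ge> 0\<close> by (auto simp: Uinf_def traj_shift Linf_loc_shift)
  then show ?thesis
    unfolding admissible_set_def by blast
qed

lemma Uinf_scaleR:
  assumes "convex E" "0 \<in> E" "convex U" "0 \<in> U" "lam \<in> {0..1}"
    and u: "u \<in> Uinf A B E U x0"
  shows "(\<lambda>t. lam *\<^sub>R u t) \<in> Uinf A B E U (lam *\<^sub>R x0)"
proof -
  have star: "lam *\<^sub>R p \<in> S" if "convex S" "0 \<in> S" "p \<in> S" for S :: "'v::real_vector set" and p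
    using convexD[OF that(1,3,2), of lam "1 - lam"] \<open>lam \<in> {0..1}\<close> by simp
  have "(traj A B (lam *\<^sub>R x0) (\<lambda>t. lam *\<^sub>R u t) t, lam *\<^sub>R u t) \<in> E \<and> lam *\<^sub>R u t \<in> U"
    if "t \<ge> 0" for t
  proof -
    have "(traj A B x0 u t, u t) \<in> E" "u t \<in> U"
      using u that by (auto simp: Uinf_def)
    from star[OF assms(1,2) this(1)] star[OF assms(3,4) this(2)] show ?thesis
      using u that by (simp add: Uinf_def traj_scaleR)
  qed
  then show ?thesis
    using u by (simp add: Uinf_def Linf_loc_scaleR)
qed

theorem proposition7:
  fixes A :: "real^'n^'n" and B :: "real^'m^'n" and U :: "(real^'m) set"
    and g :: "(real^'n) \<times> (real^'m) \<Rightarrow> real^'p" and E :: "((real^'n) \<times> (real^'m)) set"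
    and lam :: real
  assumes A4: "stabilisable A B"
    and E_def: "E = {(x, u). \<forall>i. g (x, u) $ i \<le> 0}"
    and g_C2: "C2 g"
    and U_convex: "convex U" and U_compact: "compact U" and U_origin: "0 \<in> interior U"
    and E_convex: "convex E" and E_compact: "compact E" and E_origin: "0 \<in> interior E"
    and g_convex: "\<And>i x. convex_on UNIV (\<lambda>u. g (x, u) $ i)"
    and lam: "lam \<in> {0..1}"
  shows "control_invariant A B E U ((\<lambda>x. lam *\<^sub>R x) ` admissible_set A B E U)"
  unfolding control_invariant_def
proof
  fix z assume "z \<in> (\<lambda>x. lam *\<^sub>R x) ` admissible_set A B E U"
  then obtain y0 u where z: "z = lam *\<^sub>R y0" and u: "u \<in> Uinf A B E U y0"
    unfolding admissible_set_def by blast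
  have "0 \<in> E" "0 \<in> U"
    using E_origin U_origin interior_subset by blast+
  then have v: "(\<lambda>t. lam *\<^sub>R u t) \<in> Uinf A B E U z"
    unfolding z by (rule Uinf_scaleR[OF E_convex _ U_convex _ lam u])
  have "traj A B z (\<lambda>t. lam *\<^sub>R u t) t \<in> (\<lambda>x. lam *\<^sub>R x) ` admissible_set A B E U" if "t \<ge> 0" for t
  proof -
    have "Linf_loc u"
      using u by (simp add: Uinf_def)
    then have "traj A B z (\<lambda>t. lam *\<^sub>R u t) t = lam *\<^sub>R traj A B y0 u t"
      unfolding z using that by (rule traj_scaleR)
    then show ?thesis
      using traj_in_admissible_set[OF u that] by blast
  qed
  with v show "Uinf A B E U z \<noteq> {} \<and>
      (\<exists>v\<in>Uinf A B E U z. \<forall>t\<ge>0. traj A B z v t \<in> (\<lambda>x. lam *\<^sub>R x) ` admissible_set A B E U)"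
    by blast
qed

end
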